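(* Let $G$ and $H$ be graphs, each with at least one vertex, on disjoint vertex sets, and let $S_G$ and $S_H$ be MDNSs of $G$ and $H$, respectively. Then: (1) $\tilde\gamma_{gr}^{\times2}(G+H)=\tilde\gamma_{gr}^{\times2}(G)+\tilde\gamma_{gr}^{\times2}(H)$ and $S_G\oplus S_H$ is an MDNS of $G+H$; (2) $\tilde\gamma_{gr}^{\times2}(G\vee H)=\max\{\tilde\gamma_{gr}^{\times2}(G)+a(G),\tilde\gamma_{gr}^{\times2}(H)+a(H)\}$; moreover: (a) if $\tilde\gamma_{gr}^{\times2}(G)+a(G)\ge\tilde\gamma_{gr}^{\times2}(H)+a(H)$ and $a(G)=0$, then $S_G$ is an MDNS of $G\vee H$; (b) if $\tilde\gamma_{gr}^{\times2}(G)+a(G)\ge\tilde\gamma_{gr}^{\times2}(H)+a(H)$ and $a(G)=1$, then for any $h\in V(H)$, $S_G\oplus(h)$ is an MDNS of $G\vee H$; (c) if $\tilde\gamma_{gr}^{\times2}(G)+a(G)<\tilde\gamma_{gr}^{\times2}(H)+a(H)$ and $a(H)=0$, then $S_H$ is an MDNS of $G\vee H$; (d) if $\tilde\gamma_{gr}^{\times2}(G)+a(G)<\tilde\gamma_{gr}^{\times2}(H)+a(H)$ and $a(H)=1$, then for any $g\in V(G)$, $S_H\oplus(g)$ is an MDNS of $G\vee H$.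
   Context: Graphs are finite, simple, undirected; $N[v]$ closed neighborhood. $G+H$ is the disjoint union; $G\vee H$ is the join (disjoint union plus all edges between $V(G)$ and $V(H)$). A sequence of distinct vertices $(v_1,\dots,v_k)$ is a double neighborhood sequence (DNS) if for each $i$ some $w\in N[v_i]$ satisfies $|\{j<i:w\in N[v_j]\}|\le1$; an MDNS is a DNS of maximum length and $\tilde\gamma_{gr}^{\times2}$ is that length. $\oplus$ is concatenation. $a(X)=1$ if $X$ has an isolated vertex, $a(X)=0$ otherwise. *)

theory Defs
  imports Main
begin

definition graph :: "'a set \<Rightarrow> ('a \<Rightarrow> 'a \<Rightarrow> bool) \<Rightarrow> bool" where
  "graph V E \<longleftrightarrow> finite V \<and> (\<forall>u v. E u v \<longrightarrow> u \<in> V \<and> v \<in> V \<and> u \<noteq> v \<and> E v u)"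

definition cnbhd :: "'a set \<Rightarrow> ('a \<Rightarrow> 'a \<Rightarrow> bool) \<Rightarrow> 'a \<Rightarrow> 'a set" where
  "cnbhd V E v = {w \<in> V. w = v \<or> E v w}"

text \<open>Double neighborhood sequence (indices 0-based).\<close>
definition is_dns :: "'a set \<Rightarrow> ('a \<Rightarrow> 'a \<Rightarrow> bool) \<Rightarrow> 'a list \<Rightarrow> bool" where
  "is_dns V E xs \<longleftrightarrow> distinct xs \<and> set xs \<subseteq> V \<and>
     (\<forall>i < length xs. \<exists>w \<in> cnbhd V E (xs ! i).
        card {j. j < i \<and> w \<in> cnbhd V E (xs ! j)} \<le> 1)"

definition is_mdns :: "'a set \<Rightarrow> ('a \<Rightarrow> 'a \<Rightarrow> bool) \<Rightarrow> 'a list \<Rightarrow> bool" where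
  "is_mdns V E xs \<longleftrightarrow> is_dns V E xs \<and> (\<forall>ys. is_dns V E ys \<longrightarrow> length ys \<le> length xs)"

definition gamma_dns :: "'a set \<Rightarrow> ('a \<Rightarrow> 'a \<Rightarrow> bool) \<Rightarrow> nat" where
  "gamma_dns V E = Max {length xs | xs. is_dns V E xs}"

definition has_isolated :: "'a set \<Rightarrow> ('a \<Rightarrow> 'a \<Rightarrow> bool) \<Rightarrow> nat" where
  "has_isolated V E = (if \<exists>v \<in> V. \<forall>w. \<not> E v w then 1 else 0)"

text \<open>Disjoint union G+H and join G\<or>H (edge relations; vertex set is V1 \<union> V2).\<close>
definition union_edges :: "('a \<Rightarrow> 'a \<Rightarrow> bool) \<Rightarrow> ('a \<Rightarrow> 'a \<Rightarrow> bool) \<Rightarrow> 'a \<Rightarrow> 'a \<Rightarrow> bool" where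
  "union_edges E1 E2 u v \<longleftrightarrow> E1 u v \<or> E2 u v"

definition join_edges :: "'a set \<Rightarrow> ('a \<Rightarrow> 'a \<Rightarrow> bool) \<Rightarrow> 'a set \<Rightarrow> ('a \<Rightarrow> 'a \<Rightarrow> bool) \<Rightarrow> 'a \<Rightarrow> 'a \<Rightarrow> bool" where
  "join_edges V1 E1 V2 E2 u v \<longleftrightarrow> E1 u v \<or> E2 u v \<or> (u \<in> V1 \<and> v \<in> V2) \<or> (u \<in> V2 \<and> v \<in> V1)"

end

(*
  V(G) induces G in both G + H and G \<or> H and is a homogeneous set (module) there: every
  vertex outside sees all of V(G) or none of it. Hence a DNS of G is a DNS of G + H and of
  G \<or> H, and conversely the G-vertices of a DNS of G + H or of G \<or> H form, in order, a DNS
  of G: a G-vertex whose witness lies outside V(G) has at most one G-vertex before it, so it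
  is its own witness. As DNSs of G and H also concatenate in G + H, this gives (1).

  For G \<or> H, let w, say in V(G), witness the last vertex of a DNS S, so that S covers w at
  most twice. Every H-vertex of S covers w, so if the G-part A of S covers w c times, then S
  has at most 2 - c vertices in H. On the other hand A extends to a DNS of G by 2 - c further
  vertices (w itself while it is uncovered, then w or a neighbour of w), unless w is
  isolated. Hence |S| \<le> gamma(G) + a(G). Conversely, an isolated vertex of G witnesses
  one vertex of H appended to an MDNS of G.
*)
theory Submission
  imports Defs
begin

definition cover_count :: "'a set \<Rightarrow> ('a \<Rightarrow> 'a \<Rightarrow> bool) \<Rightarrow> 'a \<Rightarrow> 'a list \<Rightarrow> nat" where
  "cover_count V E w xs = card {y \<in> set xs. w \<in> cnbhd V E y}"

lemma graph_edgeD: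
  assumes "graph V E" and "E u v"
  shows "u \<in> V" and "v \<in> V" and "u \<noteq> v" and "E v u"
  using assms by (auto simp: graph_def)

lemma self_in_cnbhd: "v \<in> V \<Longrightarrow> v \<in> cnbhd V E v"
  by (simp add: cnbhd_def)

lemma card_indices_eq_card_set:
  assumes "distinct xs"
  shows "card {j. j < length xs \<and> P (xs ! j)} = card {y \<in> set xs. P y}"
proof -
  have "card {j. j < length xs \<and> P (xs ! j)} = length (filter P xs)"
    by (simp add: length_filter_conv_card)
  also have "\<dots> = card {y \<in> set xs. P y}"
    using assms by (simp add: distinct_card[symmetric])
  finally show ?thesis .
qed

lemma is_dns_Nil [simp]: "is_dns V E []"
  by (simp add: is_dns_def)

lemma is_dns_snoc:
  "is_dns V E (xs @ [x]) \<longleftrightarrow>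
     is_dns V E xs \<and> x \<notin> set xs \<and> x \<in> V \<and> (\<exists>w \<in> cnbhd V E x. cover_count V E w xs \<le> 1)"
proof -
  let ?ok = "\<lambda>ys i. \<exists>w \<in> cnbhd V E (ys ! i). card {j. j < i \<and> w \<in> cnbhd V E (ys ! j)} \<le> 1"
  have prefix: "{j. j < i \<and> w \<in> cnbhd V E ((xs @ [x]) ! j)} = {j. j < i \<and> w \<in> cnbhd V E (xs ! j)}"
    if "i \<le> length xs" for i w
    using that by (auto simp: nth_append)
  have old: "?ok (xs @ [x]) i \<longleftrightarrow> ?ok xs i" if "i < length xs" for i
    using that prefix[of i] by (simp add: nth_append)
  have new: "?ok (xs @ [x]) (length xs) \<longleftrightarrow> (\<exists>w \<in> cnbhd V E x. cover_count V E w xs \<le> 1)"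
    if "distinct xs"
  proof -
    have "card {j. j < length xs \<and> w \<in> cnbhd V E (xs ! j)} = cover_count V E w xs" for w
      unfolding cover_count_def by (rule card_indices_eq_card_set[OF that])
    then show ?thesis
      using prefix[of "length xs"] by simp
  qed
  show ?thesis
    unfolding is_dns_def using old new by (auto simp: All_less_Suc)
qed

lemma is_dns_snocI:
  "is_dns V E xs \<Longrightarrow> x \<notin> set xs \<Longrightarrow> x \<in> V \<Longrightarrow> w \<in> cnbhd V E x \<Longrightarrow>
    cover_count V E w xs \<le> 1 \<Longrightarrow> is_dns V E (xs @ [x])"
  unfolding is_dns_snoc by blast

lemma finite_dns_lengths:
  assumes "finite V"
  shows "finite {length xs | xs. is_dns V E xs}"
proof (rule finite_subset)
  show "{length xs | xs. is_dns V E xs} \<subseteq> {..card V}"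
    using assms by (auto simp: is_dns_def distinct_card[symmetric] intro: card_mono)
qed simp

lemma length_le_gamma_dns:
  assumes "finite V" and "is_dns V E xs"
  shows "length xs \<le> gamma_dns V E"
  unfolding gamma_dns_def using finite_dns_lengths[OF assms(1)] assms(2) by (auto intro: Max_ge)

lemma gamma_dns_attained:
  assumes "finite V"
  obtains xs where "is_dns V E xs" and "length xs = gamma_dns V E"
proof -
  have "finite {length xs | xs. is_dns V E xs}"
    using finite_dns_lengths[OF assms] .
  moreover have "{length xs | xs. is_dns V E xs} \<noteq> {}"
    using is_dns_Nil by blast
  ultimately have "gamma_dns V E \<in> {length xs | xs. is_dns V E xs}"
    unfolding gamma_dns_def by (rule Max_in)
  then show ?thesis
    using that by auto
qed

lemma is_mdns_iff:
  assumes "finite V"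
  shows "is_mdns V E xs \<longleftrightarrow> is_dns V E xs \<and> length xs = gamma_dns V E"
  using length_le_gamma_dns[OF assms] gamma_dns_attained[OF assms, of E]
  unfolding is_mdns_def by (metis le_antisym)

lemma cover_count_mono: "set xs \<subseteq> set ys \<Longrightarrow> cover_count V E w xs \<le> cover_count V E w ys"
  unfolding cover_count_def by (rule card_mono) auto

lemma cover_count_snoc_le: "cover_count V E w (xs @ [x]) \<le> Suc (cover_count V E w xs)"
proof -
  have "{y \<in> set (xs @ [x]). w \<in> cnbhd V E y} \<subseteq> insert x {y \<in> set xs. w \<in> cnbhd V E y}"
    by auto
  then have "cover_count V E w (xs @ [x]) \<le> card (insert x {y \<in> set xs. w \<in> cnbhd V E y})"
    unfolding cover_count_def by (intro card_mono) auto
  also have "\<dots> \<le> Suc (cover_count V E w xs)"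
    unfolding cover_count_def by (simp add: card_insert_if)
  finally show ?thesis .
qed

lemma cover_count_pos: "w \<in> set xs \<Longrightarrow> w \<in> V \<Longrightarrow> 0 < cover_count V E w xs"
  unfolding cover_count_def by (auto simp: card_gt_0_iff self_in_cnbhd)

lemma cover_count_filter:
  "cover_count V E w xs = cover_count V E w (filter P xs) + cover_count V E w (filter (\<lambda>y. \<not> P y) xs)"
  unfolding cover_count_def by (subst card_Un_disjoint[symmetric]) (auto intro!: arg_cong[where f = card])

lemma cover_count_eq_length:
  assumes "distinct xs" and "\<forall>y \<in> set xs. w \<in> cnbhd V E y"
  shows "cover_count V E w xs = length xs"
proof -
  have "{y \<in> set xs. w \<in> cnbhd V E y} = set xs"
    using assms(2) by blast
  then show ?thesis
    unfolding cover_count_def using distinct_card[OF assms(1)] by simp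
qed

lemma cover_count_isolated_le_1:
  assumes "graph V E" and "\<forall>v. \<not> E u v"
  shows "cover_count V E u xs \<le> 1"
proof -
  have "{y \<in> set xs. u \<in> cnbhd V E y} \<subseteq> {u}"
    using assms by (auto simp: cnbhd_def graph_def)
  then show ?thesis
    unfolding cover_count_def using card_mono[of "{u}"] by fastforce
qed

lemma length_dns_less_gamma_plus_isolated:
  assumes graph: "graph V E" and dns: "is_dns V E xs" and "w \<in> V"
    and cover: "cover_count V E w xs \<le> 1"
  shows "length xs < gamma_dns V E + has_isolated V E"
proof -
  have fin: "finite V"
    using graph by (simp add: graph_def)
  consider "w \<notin> set xs" | w' where "w \<in> set xs" "E w w'" | "\<forall>w'. \<not> E w w'"
    by blast
  then show ?thesis
  proof cases
    case 1
    then have "is_dns V E (xs @ [w])"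
      using is_dns_snocI[OF dns _ \<open>w \<in> V\<close> self_in_cnbhd[OF \<open>w \<in> V\<close>] cover] by simp
    then show ?thesis
      using length_le_gamma_dns[OF fin] by fastforce
  next
    case 2
    then have w': "w' \<in> V" "w' \<noteq> w" "w \<in> cnbhd V E w'"
      using graph_edgeD[OF graph 2(2)] \<open>w \<in> V\<close> by (auto simp: cnbhd_def)
    have "w' \<notin> set xs"
    proof
      assume "w' \<in> set xs"
      then have "{w, w'} \<subseteq> {y \<in> set xs. w \<in> cnbhd V E y}"
        using 2 w' \<open>w \<in> V\<close> by (auto simp: cnbhd_def)
      then have "card {w, w'} \<le> cover_count V E w xs"
        unfolding cover_count_def by (intro card_mono) auto
      then show False
        using cover w' by simp
    qed
    then have "is_dns V E (xs @ [w'])"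
      using dns w' cover by (intro is_dns_snocI)
    then show ?thesis
      using length_le_gamma_dns[OF fin] by fastforce
  next
    case 3
    then have "has_isolated V E = 1"
      using \<open>w \<in> V\<close> by (auto simp: has_isolated_def)
    then show ?thesis
      using length_le_gamma_dns[OF fin dns] by simp
  qed
qed

lemma length_dns_add_le_gamma_plus_isolated:
  assumes graph: "graph V E" and dns: "is_dns V E xs" and "w \<in> V"
    and slack: "cover_count V E w xs + k \<le> 2"
  shows "length xs + k \<le> gamma_dns V E + has_isolated V E"
proof -
  consider "k = 0" | "k = 1" | "k = 2"
    using slack by linarith
  then show ?thesis
  proof cases
    case 1
    then show ?thesis
      using graph dns length_le_gamma_dns by (fastforce simp: graph_def)
  next
    case 2
    then show ?thesis
      using length_dns_less_gamma_plus_isolated[OF assms(1-3)] slack by simp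
  next
    case 3
    then have uncovered: "cover_count V E w xs = 0"
      using slack by simp
    then have "w \<notin> set xs"
      using cover_count_pos[OF _ \<open>w \<in> V\<close>, of xs E] by auto
    then have "is_dns V E (xs @ [w])"
      using is_dns_snocI[OF dns _ \<open>w \<in> V\<close> self_in_cnbhd[OF \<open>w \<in> V\<close>]] uncovered by simp
    moreover have "cover_count V E w (xs @ [w]) \<le> 1"
      using cover_count_snoc_le[of V E w xs w] slack 3 by simp
    ultimately show ?thesis
      using length_dns_less_gamma_plus_isolated[OF graph _ \<open>w \<in> V\<close>] 3 by fastforce
  qed
qed

definition induced_subgraph :: "'a set \<Rightarrow> ('a \<Rightarrow> 'a \<Rightarrow> bool) \<Rightarrow> 'a set \<Rightarrow> ('a \<Rightarrow> 'a \<Rightarrow> bool) \<Rightarrow> bool" where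
  "induced_subgraph V1 E1 V E \<longleftrightarrow> V1 \<subseteq> V \<and> (\<forall>u v. E1 u v \<longleftrightarrow> u \<in> V1 \<and> v \<in> V1 \<and> E u v)"

definition homogeneous_set :: "'a set \<Rightarrow> ('a \<Rightarrow> 'a \<Rightarrow> bool) \<Rightarrow> 'a set \<Rightarrow> bool" where
  "homogeneous_set V E M \<longleftrightarrow> (\<forall>w \<in> V - M. (\<forall>v \<in> M. E v w) \<or> (\<forall>v \<in> M. \<not> E v w))"

lemma cnbhd_induced_subgraph:
  "induced_subgraph V1 E1 V E \<Longrightarrow> v \<in> V1 \<Longrightarrow> cnbhd V1 E1 v = cnbhd V E v \<inter> V1"
  by (auto simp: induced_subgraph_def cnbhd_def)

lemma cover_count_induced_subgraph:
  assumes "induced_subgraph V1 E1 V E" and "w \<in> V1" and "set xs \<subseteq> V1"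
  shows "cover_count V1 E1 w xs = cover_count V E w xs"
proof -
  have "{y \<in> set xs. w \<in> cnbhd V1 E1 y} = {y \<in> set xs. w \<in> cnbhd V E y}"
    using assms cnbhd_induced_subgraph[OF assms(1)] by auto
  then show ?thesis
    by (simp add: cover_count_def)
qed

lemma is_dns_induced_subgraph:
  assumes sub: "induced_subgraph V1 E1 V E"
  shows "is_dns V1 E1 xs \<Longrightarrow> is_dns V E xs"
proof (induction xs rule: rev_induct)
  case (snoc x xs)
  have dns: "is_dns V1 E1 xs" and "x \<notin> set xs" "x \<in> V1"
    and "\<exists>w \<in> cnbhd V1 E1 x. cover_count V1 E1 w xs \<le> 1"
    using snoc.prems by (simp_all add: is_dns_snoc)
  then obtain w where w: "w \<in> cnbhd V1 E1 x" "cover_count V1 E1 w xs \<le> 1"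
    by blast
  have "w \<in> V1"
    using w(1) by (simp add: cnbhd_def)
  have "set xs \<subseteq> V1"
    using dns by (simp add: is_dns_def)
  have "x \<in> V"
    using sub \<open>x \<in> V1\<close> by (auto simp: induced_subgraph_def)
  moreover have "w \<in> cnbhd V E x"
    using w(1) cnbhd_induced_subgraph[OF sub \<open>x \<in> V1\<close>] by blast
  moreover have "cover_count V E w xs \<le> 1"
    using w(2) cover_count_induced_subgraph[OF sub \<open>w \<in> V1\<close> \<open>set xs \<subseteq> V1\<close>] by simp
  ultimately show ?case
    using is_dns_snocI[OF snoc.IH[OF dns] \<open>x \<notin> set xs\<close>] by blast
qed simp

lemma is_dns_filter_homogeneous_set:
  assumes sub: "induced_subgraph V1 E1 V E" and hom: "homogeneous_set V E V1"
  shows "is_dns V E xs \<Longrightarrow> is_dns V1 E1 (filter (\<lambda>y. y \<in> V1) xs)"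
proof (induction xs rule: rev_induct)
  case (snoc x xs)
  let ?A = "filter (\<lambda>y. y \<in> V1) xs"
  obtain w where dns: "is_dns V E xs" and "x \<notin> set xs"
    and w: "w \<in> cnbhd V E x" "cover_count V E w xs \<le> 1"
    using snoc.prems unfolding is_dns_snoc by blast
  have A: "is_dns V1 E1 ?A" "set ?A \<subseteq> V1"
    using snoc.IH[OF dns] by auto
  show ?case
  proof (cases "x \<in> V1")
    case True
    have "x \<notin> set ?A"
      using \<open>x \<notin> set xs\<close> by simp
    have "\<exists>u \<in> cnbhd V1 E1 x. cover_count V1 E1 u ?A \<le> 1"
    proof (cases "w \<in> V1")
      case True
      have "cover_count V1 E1 w ?A = cover_count V E w ?A"
        using cover_count_induced_subgraph[OF sub True A(2)] .
      also have "\<dots> \<le> cover_count V E w xs"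
        by (rule cover_count_mono) auto
      finally have "cover_count V1 E1 w ?A \<le> 1"
        using w(2) by linarith
      moreover have "w \<in> cnbhd V1 E1 x"
        using w(1) cnbhd_induced_subgraph[OF sub \<open>x \<in> V1\<close>] True by blast
      ultimately show ?thesis
        by blast
    next
      case False
      \<comment> \<open>\<open>w\<close> sees all of \<open>V1\<close>, so \<open>?A\<close> has at most one vertex and \<open>x\<close> witnesses itself\<close>
      then have "E x w" "w \<in> V"
        using w(1) \<open>x \<in> V1\<close> by (auto simp: cnbhd_def)
      then have "\<forall>v \<in> V1. E v w"
        using hom \<open>x \<in> V1\<close> False by (auto simp: homogeneous_set_def)
      then have "set ?A \<subseteq> {y \<in> set xs. w \<in> cnbhd V E y}"
        using sub \<open>w \<in> V\<close> by (auto simp: cnbhd_def induced_subgraph_def)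
      then have "card (set ?A) \<le> cover_count V E w xs"
        unfolding cover_count_def by (rule card_mono[rotated]) simp
      moreover have "cover_count V1 E1 x ?A \<le> card (set ?A)"
        unfolding cover_count_def by (rule card_mono) auto
      ultimately have "cover_count V1 E1 x ?A \<le> 1"
        using w(2) by linarith
      then show ?thesis
        using self_in_cnbhd[OF \<open>x \<in> V1\<close>, of E1] by blast
    qed
    then have "is_dns V1 E1 (?A @ [x])"
      using is_dns_snocI[OF A(1) \<open>x \<notin> set ?A\<close> True] by blast
    then show ?thesis
      using True by simp
  qed (use A in simp)
qed simp

lemma is_dns_append:
  assumes A: "is_dns V E A"
    and far: "\<forall>a \<in> set A. \<forall>b \<in> set B. cnbhd V E a \<inter> cnbhd V E b = {}"
  shows "is_dns V E B \<Longrightarrow> is_dns V E (A @ B)"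
  using far
proof (induction B rule: rev_induct)
  case (snoc x xs)
  obtain w where "is_dns V E xs" "x \<notin> set xs" "x \<in> V"
    and w: "w \<in> cnbhd V E x" "cover_count V E w xs \<le> 1"
    using snoc.prems(1) unfolding is_dns_snoc by blast
  have "x \<notin> set A"
  proof
    assume "x \<in> set A"
    then have "cnbhd V E x \<inter> cnbhd V E x = {}"
      using bspec[OF bspec[OF snoc.prems(2) \<open>x \<in> set A\<close>], of x] by simp
    then show False
      using self_in_cnbhd[OF \<open>x \<in> V\<close>, of E] by blast
  qed
  have "{y \<in> set (A @ xs). w \<in> cnbhd V E y} = {y \<in> set xs. w \<in> cnbhd V E y}"
    using snoc.prems(2) w(1) by auto
  then have "cover_count V E w (A @ xs) = cover_count V E w xs"
    by (simp add: cover_count_def)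
  then show ?case
    using snoc.IH \<open>is_dns V E xs\<close> snoc.prems(2) \<open>x \<notin> set xs\<close> \<open>x \<notin> set A\<close> \<open>x \<in> V\<close> w
      is_dns_snocI[of V E "A @ xs" x w]
    by auto
qed (simp add: A)

lemma join_edges_commute: "join_edges V2 E2 V1 E1 = join_edges V1 E1 V2 E2"
  by (intro ext) (auto simp: join_edges_def)

locale disjoint_graphs =
  fixes V1 V2 :: "'a set" and E1 E2 :: "'a \<Rightarrow> 'a \<Rightarrow> bool"
  assumes graph1: "graph V1 E1" and graph2: "graph V2 E2" and disjoint: "V1 \<inter> V2 = {}"
begin

abbreviation "V \<equiv> V1 \<union> V2"
abbreviation "EU \<equiv> union_edges E1 E2"
abbreviation "EJ \<equiv> join_edges V1 E1 V2 E2"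

lemma swap: "disjoint_graphs V2 V1 E2 E1"
  using graph1 graph2 disjoint by unfold_locales auto

lemma finite_vertices: "finite V1" "finite V2" "finite V"
  using graph1 graph2 by (auto simp: graph_def)

lemma filter_not_in_V1:
  "set xs \<subseteq> V \<Longrightarrow> filter (\<lambda>y. y \<notin> V1) xs = filter (\<lambda>y. y \<in> V2) xs"
  using disjoint by (intro filter_cong) auto

lemma length_filter_partition:
  "set xs \<subseteq> V \<Longrightarrow> length xs = length (filter (\<lambda>y. y \<in> V1) xs) + length (filter (\<lambda>y. y \<in> V2) xs)"
  using sum_length_filter_compl[of "\<lambda>y. y \<in> V1" xs] filter_not_in_V1 by simp

lemma cnbhd_union_subset:
  "v \<in> V1 \<Longrightarrow> cnbhd V EU v \<subseteq> V1" "v \<in> V2 \<Longrightarrow> cnbhd V EU v \<subseteq> V2"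
  unfolding cnbhd_def union_edges_def
  using graph_edgeD(1,2)[OF graph1] graph_edgeD(1,2)[OF graph2] disjoint by blast+

lemma induced_subgraph_union:
  "induced_subgraph V1 E1 V EU" "induced_subgraph V2 E2 V EU"
  unfolding induced_subgraph_def union_edges_def
  using graph_edgeD(1,2)[OF graph1] graph_edgeD(1,2)[OF graph2] disjoint by blast+

lemma homogeneous_set_union:
  "homogeneous_set V EU V1" "homogeneous_set V EU V2"
  unfolding homogeneous_set_def union_edges_def
  using graph_edgeD(1,2)[OF graph1] graph_edgeD(1,2)[OF graph2] disjoint by blast+

lemma induced_subgraph_join: "induced_subgraph V1 E1 V EJ"
  unfolding induced_subgraph_def join_edges_def
  using graph_edgeD(1,2)[OF graph1] graph_edgeD(1,2)[OF graph2] disjoint by blast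

lemma homogeneous_set_join: "homogeneous_set V EJ V1"
  by (auto simp: homogeneous_set_def join_edges_def)

lemma swap_eqs: "V2 \<union> V1 = V" "join_edges V2 E2 V1 E1 = EJ"
  by (auto simp: join_edges_commute)

lemma is_dns_union_append:
  assumes "is_dns V1 E1 A" and "is_dns V2 E2 B"
  shows "is_dns V EU (A @ B)"
proof (rule is_dns_append)
  show "is_dns V EU A" "is_dns V EU B"
    using assms induced_subgraph_union is_dns_induced_subgraph by blast+
  have "set A \<subseteq> V1" "set B \<subseteq> V2"
    using assms by (auto simp: is_dns_def)
  then show "\<forall>a \<in> set A. \<forall>b \<in> set B. cnbhd V EU a \<inter> cnbhd V EU b = {}"
    using cnbhd_union_subset disjoint by blast
qed

lemma length_dns_union_le:
  assumes "is_dns V EU xs"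
  shows "length xs \<le> gamma_dns V1 E1 + gamma_dns V2 E2"
proof -
  have "is_dns V1 E1 (filter (\<lambda>y. y \<in> V1) xs)" "is_dns V2 E2 (filter (\<lambda>y. y \<in> V2) xs)"
    using assms induced_subgraph_union homogeneous_set_union is_dns_filter_homogeneous_set by blast+
  then have "length (filter (\<lambda>y. y \<in> V1) xs) \<le> gamma_dns V1 E1"
    and "length (filter (\<lambda>y. y \<in> V2) xs) \<le> gamma_dns V2 E2"
    using length_le_gamma_dns[OF finite_vertices(1)] length_le_gamma_dns[OF finite_vertices(2)] by blast+
  moreover have "set xs \<subseteq> V"
    using assms by (simp add: is_dns_def)
  ultimately show ?thesis
    using length_filter_partition[OF \<open>set xs \<subseteq> V\<close>] by linarith
qed

lemma is_mdns_union_append: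
  assumes "is_mdns V1 E1 S1" and "is_mdns V2 E2 S2"
  shows "is_mdns V EU (S1 @ S2)"
proof -
  have "is_dns V1 E1 S1" "length S1 = gamma_dns V1 E1"
    using assms(1) is_mdns_iff[OF finite_vertices(1)] by blast+
  moreover have "is_dns V2 E2 S2" "length S2 = gamma_dns V2 E2"
    using assms(2) is_mdns_iff[OF finite_vertices(2)] by blast+
  ultimately show ?thesis
    unfolding is_mdns_def using is_dns_union_append length_dns_union_le by auto
qed

lemma gamma_dns_union: "gamma_dns V EU = gamma_dns V1 E1 + gamma_dns V2 E2"
proof -
  obtain S1 where S1: "is_dns V1 E1 S1" "length S1 = gamma_dns V1 E1"
    using gamma_dns_attained[OF finite_vertices(1)] .
  obtain S2 where S2: "is_dns V2 E2 S2" "length S2 = gamma_dns V2 E2"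
    using gamma_dns_attained[OF finite_vertices(2)] .
  have "is_mdns V1 E1 S1" "is_mdns V2 E2 S2"
    using S1 S2 is_mdns_iff[OF finite_vertices(1)] is_mdns_iff[OF finite_vertices(2)] by blast+
  then have "is_mdns V EU (S1 @ S2)"
    by (rule is_mdns_union_append)
  then show ?thesis
    using S1(2) S2(2) is_mdns_iff[OF finite_vertices(3)] by simp
qed

lemma cover_count_join:
  assumes "w \<in> V1" and "distinct xs" and "set xs \<subseteq> V"
  shows "cover_count V EJ w xs =
    cover_count V1 E1 w (filter (\<lambda>y. y \<in> V1) xs) + length (filter (\<lambda>y. y \<in> V2) xs)"
proof -
  have "cover_count V EJ w (filter (\<lambda>y. y \<in> V1) xs) = cover_count V1 E1 w (filter (\<lambda>y. y \<in> V1) xs)"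
    by (rule cover_count_induced_subgraph[OF induced_subgraph_join assms(1), symmetric]) auto
  moreover have "filter (\<lambda>y. y \<notin> V1) xs = filter (\<lambda>y. y \<in> V2) xs"
    using filter_not_in_V1[OF assms(3)] .
  moreover have "cover_count V EJ w (filter (\<lambda>y. y \<in> V2) xs) = length (filter (\<lambda>y. y \<in> V2) xs)"
    using assms by (intro cover_count_eq_length) (auto simp: cnbhd_def join_edges_def)
  ultimately show ?thesis
    using cover_count_filter[of V EJ w xs "\<lambda>y. y \<in> V1"] by simp
qed

lemma length_dns_join_le_left:
  assumes dns: "is_dns V EJ xs" and "w \<in> V1" and cover: "cover_count V EJ w xs \<le> 2"
  shows "length xs \<le> gamma_dns V1 E1 + has_isolated V1 E1"
proof -
  have "is_dns V1 E1 (filter (\<lambda>y. y \<in> V1) xs)"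
    using is_dns_filter_homogeneous_set[OF induced_subgraph_join homogeneous_set_join dns] .
  moreover have "distinct xs" and "set xs \<subseteq> V"
    using dns by (auto simp: is_dns_def)
  moreover have "cover_count V1 E1 w (filter (\<lambda>y. y \<in> V1) xs) + length (filter (\<lambda>y. y \<in> V2) xs) \<le> 2"
    using cover cover_count_join[OF \<open>w \<in> V1\<close> \<open>distinct xs\<close> \<open>set xs \<subseteq> V\<close>] by simp
  ultimately have
    "length (filter (\<lambda>y. y \<in> V1) xs) + length (filter (\<lambda>y. y \<in> V2) xs) \<le> gamma_dns V1 E1 + has_isolated V1 E1"
    using length_dns_add_le_gamma_plus_isolated[OF graph1 _ \<open>w \<in> V1\<close>] by blast
  then show ?thesis
    using length_filter_partition[OF \<open>set xs \<subseteq> V\<close>] by simp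
qed

lemma length_dns_join_le:
  assumes dns: "is_dns V EJ xs"
  shows "length xs \<le> max (gamma_dns V1 E1 + has_isolated V1 E1) (gamma_dns V2 E2 + has_isolated V2 E2)"
proof (cases xs rule: rev_exhaust)
  case (snoc ys y)
  then obtain w where "w \<in> cnbhd V EJ y" and "cover_count V EJ w ys \<le> 1"
    using dns unfolding snoc is_dns_snoc by blast
  then have cover: "cover_count V EJ w xs \<le> 2" and "w \<in> V"
    using cover_count_snoc_le[of V EJ w ys y] snoc by (auto simp: cnbhd_def)
  then consider "w \<in> V1" | "w \<in> V2"
    by blast
  then show ?thesis
  proof cases
    case 1
    then show ?thesis
      using length_dns_join_le_left[OF dns 1 cover] by simp
  next
    case 2
    interpret swapped: disjoint_graphs V2 V1 E2 E1
      by (rule swap)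
    show ?thesis
      using swapped.length_dns_join_le_left[unfolded swap_eqs, OF dns 2 cover] by simp
  qed
qed simp

lemma is_dns_join_snoc_isolated:
  assumes dns: "is_dns V1 E1 xs" and "has_isolated V1 E1 = 1" and "h \<in> V2"
  shows "is_dns V EJ (xs @ [h])"
proof -
  obtain u where "u \<in> V1" and isolated: "\<forall>v. \<not> E1 u v"
    using assms(2) by (auto simp: has_isolated_def split: if_splits)
  have "set xs \<subseteq> V1"
    using dns by (simp add: is_dns_def)
  then have "cover_count V EJ u xs = cover_count V1 E1 u xs"
    using cover_count_induced_subgraph[OF induced_subgraph_join \<open>u \<in> V1\<close>] by simp
  also have "\<dots> \<le> 1"
    using cover_count_isolated_le_1[OF graph1 isolated] .
  finally have "cover_count V EJ u xs \<le> 1" .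
  moreover have "u \<in> cnbhd V EJ h"
    using \<open>u \<in> V1\<close> \<open>h \<in> V2\<close> by (simp add: cnbhd_def join_edges_def)
  moreover have "h \<notin> set xs" and "h \<in> V"
    using \<open>set xs \<subseteq> V1\<close> \<open>h \<in> V2\<close> disjoint by auto
  moreover have "is_dns V EJ xs"
    using is_dns_induced_subgraph[OF induced_subgraph_join dns] .
  ultimately show ?thesis
    using is_dns_snocI[of V EJ xs h u] by blast
qed

lemma is_mdns_join_left:
  assumes le: "gamma_dns V2 E2 + has_isolated V2 E2 \<le> gamma_dns V1 E1 + has_isolated V1 E1"
    and "has_isolated V1 E1 = 0" and "is_mdns V1 E1 S"
  shows "is_mdns V EJ S"
proof -
  have "is_dns V1 E1 S" and "length S = gamma_dns V1 E1"
    using assms(3) is_mdns_iff[OF finite_vertices(1)] by blast+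
  moreover have "length ys \<le> length S" if "is_dns V EJ ys" for ys
    using length_dns_join_le[OF that] le \<open>has_isolated V1 E1 = 0\<close> \<open>length S = _\<close> by simp
  ultimately show ?thesis
    unfolding is_mdns_def using is_dns_induced_subgraph[OF induced_subgraph_join] by blast
qed

lemma is_mdns_join_snoc_left:
  assumes le: "gamma_dns V2 E2 + has_isolated V2 E2 \<le> gamma_dns V1 E1 + has_isolated V1 E1"
    and "has_isolated V1 E1 = 1" and "is_mdns V1 E1 S" and "h \<in> V2"
  shows "is_mdns V EJ (S @ [h])"
proof -
  have "is_dns V1 E1 S" and "length S = gamma_dns V1 E1"
    using assms(3) is_mdns_iff[OF finite_vertices(1)] by blast+
  moreover have "length ys \<le> length (S @ [h])" if "is_dns V EJ ys" for ys
    using length_dns_join_le[OF that] le \<open>has_isolated V1 E1 = 1\<close> \<open>length S = _\<close> by simp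
  ultimately show ?thesis
    unfolding is_mdns_def using is_dns_join_snoc_isolated assms(2,4) by blast
qed

lemma gamma_dns_join_left:
  assumes le: "gamma_dns V2 E2 + has_isolated V2 E2 \<le> gamma_dns V1 E1 + has_isolated V1 E1"
    and "V2 \<noteq> {}"
  shows "gamma_dns V EJ = gamma_dns V1 E1 + has_isolated V1 E1"
proof -
  obtain S where S: "is_dns V1 E1 S" "length S = gamma_dns V1 E1"
    using gamma_dns_attained[OF finite_vertices(1)] .
  then have "is_mdns V1 E1 S"
    using is_mdns_iff[OF finite_vertices(1)] by blast
  obtain h where "h \<in> V2"
    using \<open>V2 \<noteq> {}\<close> by blast
  consider "has_isolated V1 E1 = 0" | "has_isolated V1 E1 = 1"
    by (metis has_isolated_def)
  then show ?thesis
  proof cases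
    case 1
    then have "is_mdns V EJ S"
      using is_mdns_join_left[OF le _ \<open>is_mdns V1 E1 S\<close>] by blast
    then show ?thesis
      using S(2) 1 is_mdns_iff[OF finite_vertices(3)] by simp
  next
    case 2
    then have "is_mdns V EJ (S @ [h])"
      using is_mdns_join_snoc_left[OF le _ \<open>is_mdns V1 E1 S\<close> \<open>h \<in> V2\<close>] by blast
    then show ?thesis
      using S(2) 2 is_mdns_iff[OF finite_vertices(3)] by simp
  qed
qed

end

theorem lemma4:
  fixes VG VH :: "'a set" and EG EH :: "'a \<Rightarrow> 'a \<Rightarrow> bool" and SG SH :: "'a list"
  assumes "graph VG EG" and "graph VH EH"
    and "VG \<noteq> {}" and "VH \<noteq> {}" and "VG \<inter> VH = {}"
    and "is_mdns VG EG SG" and "is_mdns VH EH SH"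
  shows "gamma_dns (VG \<union> VH) (union_edges EG EH) = gamma_dns VG EG + gamma_dns VH EH
     \<and> is_mdns (VG \<union> VH) (union_edges EG EH) (SG @ SH)
     \<and> gamma_dns (VG \<union> VH) (join_edges VG EG VH EH)
         = max (gamma_dns VG EG + has_isolated VG EG) (gamma_dns VH EH + has_isolated VH EH)
     \<and> (gamma_dns VG EG + has_isolated VG EG \<ge> gamma_dns VH EH + has_isolated VH EH
          \<and> has_isolated VG EG = 0 \<longrightarrow> is_mdns (VG \<union> VH) (join_edges VG EG VH EH) SG)
     \<and> (gamma_dns VG EG + has_isolated VG EG \<ge> gamma_dns VH EH + has_isolated VH EH
          \<and> has_isolated VG EG = 1 \<longrightarrow>
          (\<forall>h \<in> VH. is_mdns (VG \<union> VH) (join_edges VG EG VH EH) (SG @ [h])))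
     \<and> (gamma_dns VG EG + has_isolated VG EG < gamma_dns VH EH + has_isolated VH EH
          \<and> has_isolated VH EH = 0 \<longrightarrow> is_mdns (VG \<union> VH) (join_edges VG EG VH EH) SH)
     \<and> (gamma_dns VG EG + has_isolated VG EG < gamma_dns VH EH + has_isolated VH EH
          \<and> has_isolated VH EH = 1 \<longrightarrow>
          (\<forall>g \<in> VG. is_mdns (VG \<union> VH) (join_edges VG EG VH EH) (SH @ [g])))"
proof -
  interpret G: disjoint_graphs VG VH EG EH
    using assms(1,2,5) by unfold_locales
  interpret H: disjoint_graphs VH VG EH EG
    by (rule G.swap)
  have union: "gamma_dns (VG \<union> VH) (union_edges EG EH) = gamma_dns VG EG + gamma_dns VH EH"
    "is_mdns (VG \<union> VH) (union_edges EG EH) (SG @ SH)"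
    using G.gamma_dns_union G.is_mdns_union_append[OF assms(6,7)] by blast+
  show ?thesis
  proof (cases "gamma_dns VH EH + has_isolated VH EH \<le> gamma_dns VG EG + has_isolated VG EG")
    case True
    then show ?thesis
      using union G.gamma_dns_join_left[OF True assms(4)]
        G.is_mdns_join_left[OF True _ assms(6)] G.is_mdns_join_snoc_left[OF True _ assms(6)]
      by auto
  next
    case False
    then have le: "gamma_dns VG EG + has_isolated VG EG \<le> gamma_dns VH EH + has_isolated VH EH"
      by simp
    show ?thesis
      using union False H.gamma_dns_join_left[OF le assms(3), unfolded G.swap_eqs]
        H.is_mdns_join_left[OF le _ assms(7), unfolded G.swap_eqs]
        H.is_mdns_join_snoc_left[OF le _ assms(7), unfolded G.swap_eqs]
      by auto
  qed
qed

end
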